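(* Let $\mathfrak{A}$ be a $(\circ,\wedge,\mathsf{A})$-algebra that is representable by partial functions and atomic, and in which composition is completely left-distributive over joins (for every $a\in\mathfrak{A}$ and every $S\subseteq\mathfrak{A}$ such that $\bigvee S$ exists, $\bigvee\{a\circ s\mid s\in S\}$ exists and equals $a\circ\bigvee S$). Let $\mathrm{At}(\mathfrak{A})$ be the set of atoms of $\mathfrak{A}$, and for $a\in\mathfrak{A}$ define the partial function $\theta(a)$ on $\mathrm{At}(\mathfrak{A})$ by $\theta(a)(x)=x\circ a$ if $x\circ a\neq 0$, and undefined otherwise. Then $x\circ a$ is an atom whenever it is nonzero, and $\theta$ is a complete representation of $\mathfrak{A}$ by partial functions with base $\mathrm{At}(\mathfrak{A})$.
   Context: A $(\circ,\wedge,\mathsf{A})$-algebra is a set with two binary operations $\circ,\wedge$ and one unary operation $\mathsf{A}$. An algebra of partial functions of this signature is a set of partial functions, with base $X$ the union of all their domains and ranges, closed under: composition $f\circ g=\{(x,z)\mid \exists y\,(x,y)\in f,(y,z)\in g\}$ (apply $f$ first, then $g$); intersection; antidomain $\mathsf{A}(f)=\{(x,x)\mid x\in X, x\notin\mathrm{dom}(f)\}$. A representation by partial functions is an isomorphism onto such an algebra. The order is $a\le b\iff a\wedge b=a$, with least element $0=\mathsf{A}(a)\circ a$. An atom is a minimal nonzero element; $\mathfrak{A}$ is atomic if every nonzero element is above an atom. A representation $\theta$ is complete if for every $S$ with $\bigvee S$ existing, $\theta(\bigvee S)=\bigcup\theta[S]$ (equivalently, for every nonempty $S$ with $\bigwedge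 S$ existing, $\theta(\bigwedge S)=\bigcap\theta[S]$). *)

theory Defs
  imports Main
begin

text \<open>Composition is diagrammatic: c f g = "f first, then g", matching relational
composition O in Isabelle.\<close>

definition base :: "('a \<Rightarrow> ('b \<times> 'b) set) \<Rightarrow> 'b set" where
  "base \<theta> = (\<Union>a. Domain (\<theta> a) \<union> Range (\<theta> a))"

definition rep_pf ::
  "('a \<Rightarrow> 'a \<Rightarrow> 'a) \<Rightarrow> ('a \<Rightarrow> 'a \<Rightarrow> 'a) \<Rightarrow> ('a \<Rightarrow> 'a) \<Rightarrow> ('a \<Rightarrow> ('b \<times> 'b) set) \<Rightarrow> bool" where
  "rep_pf c m ad \<theta> \<longleftrightarrow>
     inj \<theta> \<and>
     (\<forall>a. single_valued (\<theta> a)) \<and>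
     (\<forall>a b. \<theta> (c a b) = \<theta> a O \<theta> b) \<and>
     (\<forall>a b. \<theta> (m a b) = \<theta> a \<inter> \<theta> b) \<and>
     (\<forall>a. \<theta> (ad a) = {(x, x) | x. x \<in> base \<theta> \<and> x \<notin> Domain (\<theta> a)})"

definition le :: "('a \<Rightarrow> 'a \<Rightarrow> 'a) \<Rightarrow> 'a \<Rightarrow> 'a \<Rightarrow> bool" where
  "le m a b \<longleftrightarrow> m a b = a"

text \<open>Least element 0 = A(a) o a (independent of a in representable algebras;
we use a fixed arbitrary element).\<close>
definition zero :: "('a \<Rightarrow> 'a \<Rightarrow> 'a) \<Rightarrow> ('a \<Rightarrow> 'a) \<Rightarrow> 'a" where
  "zero c ad = c (ad undefined) undefined"

definition atom :: "('a \<Rightarrow> 'a \<Rightarrow> 'a) \<Rightarrow> ('a \<Rightarrow> 'a \<Rightarrow> 'a) \<Rightarrow> ('a \<Rightarrow> 'a) \<Rightarrow> 'a \<Rightarrow> bool" where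
  "atom c m ad x \<longleftrightarrow> x \<noteq> zero c ad \<and> (\<forall>y. le m y x \<longrightarrow> y = zero c ad \<or> y = x)"

definition atomic :: "('a \<Rightarrow> 'a \<Rightarrow> 'a) \<Rightarrow> ('a \<Rightarrow> 'a \<Rightarrow> 'a) \<Rightarrow> ('a \<Rightarrow> 'a) \<Rightarrow> bool" where
  "atomic c m ad \<longleftrightarrow> (\<forall>a. a \<noteq> zero c ad \<longrightarrow> (\<exists>x. atom c m ad x \<and> le m x a))"

definition is_join :: "('a \<Rightarrow> 'a \<Rightarrow> 'a) \<Rightarrow> 'a set \<Rightarrow> 'a \<Rightarrow> bool" where
  "is_join m S j \<longleftrightarrow> (\<forall>s\<in>S. le m s j) \<and> (\<forall>u. (\<forall>s\<in>S. le m s u) \<longrightarrow> le m j u)"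

definition comp_left_distrib :: "('a \<Rightarrow> 'a \<Rightarrow> 'a) \<Rightarrow> ('a \<Rightarrow> 'a \<Rightarrow> 'a) \<Rightarrow> bool" where
  "comp_left_distrib c m \<longleftrightarrow>
     (\<forall>a S j. is_join m S j \<longrightarrow> is_join m ((\<lambda>s. c a s) ` S) (c a j))"

definition complete_rep ::
  "('a \<Rightarrow> 'a \<Rightarrow> 'a) \<Rightarrow> ('a \<Rightarrow> 'a \<Rightarrow> 'a) \<Rightarrow> ('a \<Rightarrow> 'a) \<Rightarrow> ('a \<Rightarrow> ('b \<times> 'b) set) \<Rightarrow> bool" where
  "complete_rep c m ad \<theta> \<longleftrightarrow> rep_pf c m ad \<theta> \<and>
     (\<forall>S j. is_join m S j \<longrightarrow> \<theta> j = (\<Union>s\<in>S. \<theta> s))"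

definition atom_theta :: "('a \<Rightarrow> 'a \<Rightarrow> 'a) \<Rightarrow> ('a \<Rightarrow> 'a \<Rightarrow> 'a) \<Rightarrow> ('a \<Rightarrow> 'a) \<Rightarrow> 'a \<Rightarrow> ('a \<times> 'a) set" where
  "atom_theta c m ad a = {(x, c x a) | x. atom c m ad x \<and> c x a \<noteq> zero c ad}"

end

theory Submission
  imports Defs
begin

text \<open>
  Fix some representation \<open>th\<close> of the algebra by partial functions.  Because
  \<open>th\<close> is injective and preserves the operations, every order-theoretic question about the
  algebra becomes a question about relations: \<open>a \<le> b\<close> means \<open>th a \<subseteq> th b\<close>, the zero is the
  empty relation, and the atoms are exactly the elements with a minimal nonempty image.
  The key observation is that for an atom \<open>x\<close> the partial function \<open>th x\<close> is
  "indecomposable": any nonzero element below \<open>x \<circ> a\<close> has a domain covering that of \<open>x\<close>, so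
  \<open>x \<circ> a\<close> is again an atom whenever it is nonzero.  From this one computes, for an atom \<open>x\<close>,
  the values \<open>x \<circ> (a \<circ> b)\<close>, \<open>x \<circ> (a \<and> b)\<close>, \<open>x \<circ> A(a)\<close> and shows that the atom-structure map
  \<open>\<theta>\<close> preserves composition, meet and antidomain.  Injectivity of \<open>\<theta>\<close> uses atomicity: a pair
  in \<open>th a - th b\<close> yields a nonzero domain element, and an atom below it separates \<open>a\<close> from \<open>b\<close>.
  Completeness uses left distributivity: if \<open>x \<circ> j \<noteq> 0\<close> for a join \<open>j = \<Or>S\<close>, then some
  \<open>x \<circ> s\<close> with \<open>s \<in> S\<close> is nonzero, and being below the atom \<open>x \<circ> j\<close> it equals it.
\<close>

lemma single_valued_subrel_eq:
  assumes "single_valued R" and "S \<subseteq> R" and "Domain R \<subseteq> Domain S"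
  shows "S = R"
proof
  show "R \<subseteq> S"
  proof (rule subrelI)
    fix p q assume pq: "(p, q) \<in> R"
    then obtain q' where pq': "(p, q') \<in> S" using assms(3) by blast
    then have "q' = q" using pq assms(1,2) by (auto dest: single_valuedD)
    then show "(p, q) \<in> S" using pq' by simp
  qed
qed (rule assms(2))

lemma single_valued_relcomp_Int:
  assumes "single_valued R" and "R O S = R O S'"
  shows "R O (S \<inter> S') = R O S"
proof
  show "R O S \<subseteq> R O (S \<inter> S')"
  proof (rule subrelI)
    fix p s assume ps: "(p, s) \<in> R O S"
    then obtain r where r: "(p, r) \<in> R" "(r, s) \<in> S" by blast
    from ps obtain r' where r': "(p, r') \<in> R" "(r', s) \<in> S'" using assms(2) by blast
    have "r' = r" using r r' assms(1) by (auto dest: single_valuedD)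
    then show "(p, s) \<in> R O (S \<inter> S')" using r r' by blast
  qed
qed blast

locale pfun_rep =
  fixes c m :: "'a \<Rightarrow> 'a \<Rightarrow> 'a" and ad :: "'a \<Rightarrow> 'a" and th :: "'a \<Rightarrow> ('b \<times> 'b) set"
  assumes rep: "rep_pf c m ad th"
begin

abbreviation is_atom :: "'a \<Rightarrow> bool" where "is_atom \<equiv> atom c m ad"

abbreviation T :: "'a \<Rightarrow> ('a \<times> 'a) set" where "T \<equiv> atom_theta c m ad"

lemma th_inj: "inj th"
  and th_single_valued: "single_valued (th a)"
  and th_comp: "th (c a b) = th a O th b"
  and th_meet: "th (m a b) = th a \<inter> th b"
  and th_antidomain: "th (ad a) = {(x, x) | x. x \<in> base th \<and> x \<notin> Domain (th a)}"
  using rep unfolding rep_pf_def by auto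

lemma th_eq_iff: "a = b \<longleftrightarrow> th a = th b"
  using th_inj by (auto dest: injD)

lemma le_iff_subset: "le m a b \<longleftrightarrow> th a \<subseteq> th b"
  unfolding le_def th_eq_iff[of "m a b" a] th_meet by blast

lemma th_zero: "th (zero c ad) = {}"
  unfolding zero_def th_comp th_antidomain by auto

lemma zero_iff_empty: "a = zero c ad \<longleftrightarrow> th a = {}"
  using th_eq_iff th_zero by auto

lemma atom_iff_minimal:
  "is_atom x \<longleftrightarrow> th x \<noteq> {} \<and> (\<forall>y. th y \<subseteq> th x \<longrightarrow> th y = {} \<or> y = x)"
  unfolding atom_def le_iff_subset zero_iff_empty ..

lemma atom_nonempty: "is_atom x \<Longrightarrow> th x \<noteq> {}"
  using atom_iff_minimal by blast

lemma below_atom_eq: "is_atom x \<Longrightarrow> th y \<subseteq> th x \<Longrightarrow> th y \<noteq> {} \<Longrightarrow> y = x"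
  using atom_iff_minimal by blast

lemma field_subset_base: "Domain (th a) \<subseteq> base th" "Range (th a) \<subseteq> base th"
  unfolding base_def by blast+

lemma th_domain_element: "th (ad (ad y)) = Id_on (Domain (th y))"
  unfolding th_antidomain using field_subset_base(1)[of y] by (auto simp: Id_on_def)

lemma th_restrict: "th (c (ad (ad y)) x) = {(p, q) \<in> th x. p \<in> Domain (th y)}"
  unfolding th_comp th_domain_element by auto

lemma atom_comp:
  assumes atom: "is_atom x" and nonzero: "th (c x a) \<noteq> {}"
  shows "is_atom (c x a)"
proof -
  have "y = c x a" if below: "th y \<subseteq> th (c x a)" and "th y \<noteq> {}" for y
  proof -
    obtain p q where pq: "(p, q) \<in> th y" using \<open>th y \<noteq> {}\<close> by auto
    then obtain r where "(p, r) \<in> th x" using below th_comp by blast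
    then have "th (c (ad (ad y)) x) \<noteq> {}" using pq th_restrict by blast
    moreover have "th (c (ad (ad y)) x) \<subseteq> th x" unfolding th_restrict by blast
    ultimately have "c (ad (ad y)) x = x" using atom below_atom_eq by blast
    then have "Domain (th x) \<subseteq> Domain (th y)" using th_restrict[of y x] by auto
    then have "Domain (th (c x a)) \<subseteq> Domain (th y)" using th_comp by auto
    then show ?thesis using single_valued_subrel_eq[OF th_single_valued below] th_eq_iff by metis
  qed
  then show ?thesis using nonzero atom_iff_minimal by blast
qed

lemma atom_comp_below_eq:
  assumes "is_atom x" and "th (c x s) \<noteq> {}" and "th (c x s) \<subseteq> th (c x t)"
  shows "c x s = c x t"
proof -
  have "th (c x t) \<noteq> {}" using assms(2,3) by blast
  then show ?thesis using assms atom_comp below_atom_eq by blast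
qed

lemma T_mem: "(x, z) \<in> T a \<longleftrightarrow> is_atom x \<and> th (c x a) \<noteq> {} \<and> z = c x a"
  unfolding atom_theta_def zero_iff_empty by auto

text \<open>The identity \<open>A(0)\<close> fixes every atom, so every atom lies in the base of \<open>\<theta>\<close>.\<close>
lemma base_T: "base T = {x. is_atom x}"
proof
  show "base T \<subseteq> {x. is_atom x}"
    unfolding base_def using T_mem atom_comp by fastforce
  show "{x. is_atom x} \<subseteq> base T"
  proof
    fix x assume "x \<in> {x. is_atom x}"
    then have atom: "is_atom x" by simp
    have "th (c x (ad (zero c ad))) = th x"
      unfolding th_comp th_antidomain th_zero using field_subset_base(2)[of x] by auto
    then have "(x, c x (ad (zero c ad))) \<in> T (ad (zero c ad))"
      using T_mem atom atom_nonempty by metis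
    then show "x \<in> base T" unfolding base_def by blast
  qed
qed

lemma atom_comp_antidomain:
  assumes atom: "is_atom x"
  shows "c x (ad a) = (if th (c x a) = {} then x else zero c ad)"
proof -
  have restr: "th (c x (ad a)) = {(p, q) \<in> th x. q \<notin> Domain (th a)}"
    unfolding th_comp th_antidomain using field_subset_base(2)[of x] by auto
  show ?thesis
  proof (cases "th (c x a) = {}")
    case True
    then have "th (c x (ad a)) = th x" using restr th_comp by auto
    then show ?thesis using True th_eq_iff by simp
  next
    case False
    have "th (c x (ad a)) = {}"
    proof (rule ccontr)
      assume "th (c x (ad a)) \<noteq> {}"
      moreover have "th (c x (ad a)) \<subseteq> th x" using restr by auto
      ultimately have "c x (ad a) = x" using atom below_atom_eq by blast
      then have "th x = {(p, q) \<in> th x. q \<notin> Domain (th a)}" using restr by simp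
      then have "th (c x a) = {}" unfolding th_comp by blast
      then show False using False by simp
    qed
    then show ?thesis using False zero_iff_empty by simp
  qed
qed

lemma atom_comp_meet:
  assumes atom: "is_atom x"
  shows "th (c x (m a b)) \<noteq> {} \<longleftrightarrow> th (c x a) \<noteq> {} \<and> c x a = c x b"
    and "th (c x (m a b)) \<noteq> {} \<Longrightarrow> c x (m a b) = c x a"
proof -
  have below: "th (c x (m a b)) \<subseteq> th (c x a)" "th (c x (m a b)) \<subseteq> th (c x b)"
    unfolding th_comp th_meet by auto
  show eq_a: "c x (m a b) = c x a" if "th (c x (m a b)) \<noteq> {}"
    using atom_comp_below_eq[OF atom that below(1)] .
  have eq_b: "c x (m a b) = c x b" if "th (c x (m a b)) \<noteq> {}"
    using atom_comp_below_eq[OF atom that below(2)] .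
  have "c x (m a b) = c x a" if "c x a = c x b"
    using single_valued_relcomp_Int[OF th_single_valued[of x], of "th a" "th b"] that
    unfolding th_eq_iff th_comp th_meet by simp
  then show "th (c x (m a b)) \<noteq> {} \<longleftrightarrow> th (c x a) \<noteq> {} \<and> c x a = c x b"
    using eq_a eq_b by metis
qed

text \<open>Atomicity provides, for \<open>th a \<noteq> th b\<close>, an atom \<open>x\<close> with \<open>x \<circ> a \<noteq> 0\<close> and
  \<open>x \<circ> a \<noteq> x \<circ> b\<close>: take an atom below the domain of the part of \<open>a\<close> outside \<open>a \<and> b\<close>.\<close>
lemma separating_atom:
  assumes atomic: "atomic c m ad" and pq: "(p, q) \<in> th a" "(p, q) \<notin> th b"
  obtains x where "is_atom x" "th (c x a) \<noteq> {}" "c x a \<noteq> c x b"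
proof -
  let ?y = "c (ad (m a b)) a"
  have th_y: "th ?y = {(u, v) \<in> th a. u \<notin> Domain (th a \<inter> th b)}"
    unfolding th_comp th_antidomain th_meet base_def by auto
  have "p \<notin> Domain (th a \<inter> th b)"
    using pq th_single_valued[of a] by (auto dest: single_valuedD)
  then have "(p, q) \<in> th ?y" using pq th_y by simp
  then have "th (ad (ad ?y)) \<noteq> {}" unfolding th_domain_element by auto
  then obtain x where atom: "is_atom x" and below: "th x \<subseteq> Id_on (Domain (th ?y))"
    using atomic th_domain_element unfolding atomic_def zero_iff_empty le_iff_subset by metis
  obtain u where "(u, u) \<in> th x" using below atom_nonempty[OF atom] by auto
  moreover obtain v where uv: "(u, v) \<in> th a" "u \<notin> Domain (th a \<inter> th b)"
    using calculation below th_y by auto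
  ultimately have in_a: "(u, v) \<in> th (c x a)" using th_comp by auto
  moreover have "(u, v) \<notin> th (c x b)"
    using below uv unfolding th_comp by auto
  ultimately have "c x a \<noteq> c x b" by metis
  then show ?thesis using that atom in_a by blast
qed

lemma T_inj:
  assumes atomic: "atomic c m ad"
  shows "inj T"
proof (rule injI)
  have separate: "T a \<noteq> T b" if "(p, q) \<in> th a" "(p, q) \<notin> th b" for a b p q
    using separating_atom[OF atomic that] T_mem by metis
  fix a b assume "T a = T b"
  then have "th a = th b" using separate by (metis subrelI subset_antisym)
  then show "a = b" using th_eq_iff by blast
qed

lemma T_single_valued: "single_valued (T a)"
  unfolding single_valued_def using T_mem by auto

lemma T_comp: "T (c a b) = T a O T b"
proof (rule set_eqI, unfold split_paired_all)
  fix x z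
  have assoc: "c x (c a b) = c (c x a) b" using th_eq_iff th_comp O_assoc by metis
  have "(x, z) \<in> T (c a b) \<longleftrightarrow> is_atom x \<and> th (c x a) \<noteq> {} \<and> th (c (c x a) b) \<noteq> {} \<and> z = c (c x a) b"
    unfolding T_mem assoc th_comp[of "c x a"] by blast
  also have "\<dots> \<longleftrightarrow> (x, z) \<in> T a O T b"
    unfolding relcomp_unfold T_mem using atom_comp by blast
  finally show "(x, z) \<in> T (c a b) \<longleftrightarrow> (x, z) \<in> T a O T b" .
qed

lemma T_meet: "T (m a b) = T a \<inter> T b"
proof (rule set_eqI, unfold split_paired_all)
  fix x z
  show "(x, z) \<in> T (m a b) \<longleftrightarrow> (x, z) \<in> T a \<inter> T b"
    unfolding Int_iff T_mem using atom_comp_meet[of x a b] by metis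
qed

lemma T_antidomain: "T (ad a) = {(x, x) | x. x \<in> base T \<and> x \<notin> Domain (T a)}"
proof (rule set_eqI, unfold split_paired_all)
  fix x z
  have "(x, z) \<in> T (ad a) \<longleftrightarrow> is_atom x \<and> th (c x a) = {} \<and> z = x"
  proof (cases "is_atom x")
    case True
    then show ?thesis
      unfolding T_mem atom_comp_antidomain[OF True] using atom_nonempty th_zero by auto
  qed (simp add: T_mem)
  moreover have "x \<in> Domain (T a) \<longleftrightarrow> is_atom x \<and> th (c x a) \<noteq> {}" using T_mem by auto
  ultimately show "(x, z) \<in> T (ad a) \<longleftrightarrow> (x, z) \<in> {(x, x) | x. x \<in> base T \<and> x \<notin> Domain (T a)}"
    unfolding base_T by auto
qed

theorem rep_T:
  assumes "atomic c m ad"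
  shows "rep_pf c m ad T"
  unfolding rep_pf_def
  using T_inj[OF assms] T_single_valued T_comp T_meet T_antidomain by blast

text \<open>If \<open>j = \<Or>S\<close> and \<open>x \<circ> j \<noteq> 0\<close>, then some \<open>x \<circ> s\<close> is nonzero: otherwise \<open>0\<close> would be an
  upper bound of \<open>{x \<circ> s | s \<in> S}\<close>, whose join is \<open>x \<circ> j\<close> by left distributivity.\<close>
lemma join_comp_nonzero:
  assumes dist: "comp_left_distrib c m" and join: "is_join m S j"
    and nonzero: "th (c x j) \<noteq> {}"
  obtains s where "s \<in> S" "th (c x s) \<noteq> {}"
proof (rule ccontr)
  assume "\<not> thesis"
  then have "\<forall>t\<in>(\<lambda>s. c x s) ` S. le m t (zero c ad)"
    using that unfolding le_iff_subset th_zero by auto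
  moreover have "is_join m ((\<lambda>s. c x s) ` S) (c x j)"
    using dist join unfolding comp_left_distrib_def by blast
  ultimately have "le m (c x j) (zero c ad)" unfolding is_join_def by blast
  then show False using nonzero unfolding le_iff_subset th_zero by auto
qed

theorem complete_T:
  assumes dist: "comp_left_distrib c m" and join: "is_join m S j"
  shows "T j = (\<Union>s\<in>S. T s)"
proof (rule set_eqI, unfold split_paired_all)
  fix x z
  have below_j: "th (c x s) \<subseteq> th (c x j)" if "s \<in> S" for s
    using join that unfolding is_join_def le_iff_subset th_comp by blast
  show "(x, z) \<in> T j \<longleftrightarrow> (x, z) \<in> (\<Union>s\<in>S. T s)"
  proof
    assume "(x, z) \<in> T j"
    then have atom: "is_atom x" and nonzero: "th (c x j) \<noteq> {}" and z: "z = c x j"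
      using T_mem by auto
    obtain s where s: "s \<in> S" "th (c x s) \<noteq> {}"
      using join_comp_nonzero[OF dist join nonzero] .
    then have "c x s = c x j" using atom_comp_below_eq atom below_j by blast
    then have "(x, z) \<in> T s" using T_mem atom s z by metis
    then show "(x, z) \<in> (\<Union>s\<in>S. T s)" using s by blast
  next
    assume "(x, z) \<in> (\<Union>s\<in>S. T s)"
    then obtain s where s: "s \<in> S" "is_atom x" "th (c x s) \<noteq> {}" "z = c x s"
      using T_mem by auto
    then have "c x s = c x j" using atom_comp_below_eq below_j by blast
    then show "(x, z) \<in> T j" using T_mem s by metis
  qed
qed

end

theorem mainTheorem13:
  fixes c m :: "'a \<Rightarrow> 'a \<Rightarrow> 'a" and ad :: "'a \<Rightarrow> 'a" and \<theta>0 :: "'a \<Rightarrow> ('b \<times> 'b) set"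
  assumes "rep_pf c m ad \<theta>0"
    and "atomic c m ad"
    and "comp_left_distrib c m"
  shows "(\<forall>x a. atom c m ad x \<and> c x a \<noteq> zero c ad \<longrightarrow> atom c m ad (c x a))
         \<and> complete_rep c m ad (atom_theta c m ad)
         \<and> base (atom_theta c m ad) = {x. atom c m ad x}"
proof -
  interpret pfun_rep c m ad \<theta>0 using assms(1) by (rule pfun_rep.intro)
  have "\<forall>x a. atom c m ad x \<and> c x a \<noteq> zero c ad \<longrightarrow> atom c m ad (c x a)"
    using atom_comp zero_iff_empty by blast
  moreover have "complete_rep c m ad (atom_theta c m ad)"
    unfolding complete_rep_def using rep_T[OF assms(2)] complete_T[OF assms(3)] by blast
  ultimately show ?thesis using base_T by blast
qed

end
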